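(* With $\Psi^s_{\mathbf{j}}\in\mathcal{M}_k(\mathbb{R}^n;V)$ as defined below, for every $\ell\in\{2,\dots,n\}$, $$\Gamma_{[\ell]}\Psi^s_{\mathbf{j}}=\lambda_\ell(\mathbf{j})\Psi^s_{\mathbf{j}},\qquad \lambda_\ell(\mathbf{j})=(-1)^{|\mathbf{j}_{\ell-1}|}\big(|\mathbf{j}_{\ell-1}|+\gamma_{[\ell]}-\tfrac12\big),$$ where $|\mathbf{j}_m|=j_1+\dots+j_m$ (so $|\mathbf{j}_{n-1}|=k$).
   Context: Fix $n\ge3$ and real parameters $\mu_1,\dots,\mu_n>0$; write $[\ell]=\{1,\dots,\ell\}$. For $i\in[n]$, $r_i$ is the reflection $(r_if)(x)=f(x_1,\dots,-x_i,\dots,x_n)$ and $T_i=\partial_{x_i}+\frac{\mu_i}{x_i}(1-r_i)$. $\mathcal{C}\ell_n$ is generated by $e_1,\dots,e_n$ with $e_ie_j+e_je_i=-2\delta_{ij}$, $V$ a fixed finite-dimensional left $\mathcal{C}\ell_n$-module with basis $\{v_s\}_{s\in I}$; operators act on $V$-valued polynomials with $x_i,T_i,r_i$ on the polynomial factor and $e_i$ by left multiplication. For $A\subseteq[n]$: $\underline{D}_A=\sum_{i\in A}e_iT_i$, $\underline{x}_A=\sum_{i\in A}e_ix_i$, $\gamma_A=\frac{|A|}2+\sum_{i\in A}\mu_i$, $\underline{S}_A=\frac12([\underline{x}_A,\underline{D}_A]-1)$, $\Gamma_A=\underline{S}_A\prod_{i\in A}r_i$. $\mathcal{M}_k(\mathbb{R}^n;V)=\ker\underline{D}_{[n]}\cap(\mathcal{P}_k(\mathbb{R}^n)\otimes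 V)$. For $2\le j\le n$, $\mathbf{CK}^{\mu_j}_{x_j}=\Gamma(\mu_j+\tfrac12)\big[\widetilde I_{\mu_j-1/2}(x_j\underline{D}_{[j-1]})+\tfrac12 e_jx_j\underline{D}_{[j-1]}\widetilde I_{\mu_j+1/2}(x_j\underline{D}_{[j-1]})\big]$ with $\widetilde I_\alpha(z)=\sum_{m\ge0}\frac{(z/2)^{2m}}{m!\Gamma(m+\alpha+1)}$, acting on polynomials in $x_1,\dots,x_{j-1}$. For non-negative integers $j_1,\dots,j_{n-2}$ with sum $\le k$, $j_{n-1}=k-\sum_{i\le n-2}j_i$, $\mathbf{j}=(j_1,\dots,j_{n-1})$, and $s\in I$: $\Psi^s_{\mathbf{j}}=\mathbf{CK}^{\mu_n}_{x_n}\big[\underline{x}_{[n-1]}^{j_{n-1}}\mathbf{CK}^{\mu_{n-1}}_{x_{n-1}}\big[\cdots\mathbf{CK}^{\mu_3}_{x_3}[\underline{x}_{[2]}^{j_2}\mathbf{CK}^{\mu_2}_{x_2}[x_1^{j_1}]]\cdots\big]\big]v_s$. *)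

theory Defs
  imports "HOL-Analysis.Analysis" "HOL-Library.Poly_Mapping"
begin

(* A V-valued polynomial in the variables x_1, x_2, ... is represented by its
   coefficient function: exponent vector alpha (finitely supported, variable
   index |-> exponent) |-> coefficient in V. *)
type_synonym 'v vpoly = "(nat \<Rightarrow>\<^sub>0 nat) \<Rightarrow> 'v"

definition mulx :: "nat \<Rightarrow> 'v::real_vector vpoly \<Rightarrow> 'v vpoly" where
  "mulx i p = (\<lambda>\<alpha>. if Poly_Mapping.lookup \<alpha> i = 0 then 0 else p (\<alpha> - Poly_Mapping.single i 1))"

definition dx :: "nat \<Rightarrow> 'v::real_vector vpoly \<Rightarrow> 'v vpoly" where
  "dx i p = (\<lambda>\<alpha>. real (Poly_Mapping.lookup \<alpha> i + 1) *\<^sub>R p (\<alpha> + Poly_Mapping.single i 1))"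

definition refl :: "nat \<Rightarrow> 'v::real_vector vpoly \<Rightarrow> 'v vpoly" where
  "refl i p = (\<lambda>\<alpha>. ((-1::real) ^ Poly_Mapping.lookup \<alpha> i) *\<^sub>R p \<alpha>)"

(* division by x_i (exact on polynomials divisible by x_i) *)
definition divx :: "nat \<Rightarrow> 'v::real_vector vpoly \<Rightarrow> 'v vpoly" where
  "divx i p = (\<lambda>\<alpha>. p (\<alpha> + Poly_Mapping.single i 1))"

definition dunkl :: "(nat \<Rightarrow> real) \<Rightarrow> nat \<Rightarrow> 'v::real_vector vpoly \<Rightarrow> 'v vpoly" where
  "dunkl mu i p = (\<lambda>\<alpha>. dx i p \<alpha> + mu i *\<^sub>R divx i (\<lambda>\<beta>. p \<beta> - refl i p \<beta>) \<alpha>)"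

definition DiracA :: "(nat \<Rightarrow> 'v \<Rightarrow> 'v) \<Rightarrow> (nat \<Rightarrow> real) \<Rightarrow> nat set \<Rightarrow> 'v::real_vector vpoly \<Rightarrow> 'v vpoly" where
  "DiracA e mu A p = (\<lambda>\<alpha>. \<Sum>i\<in>A. e i (dunkl mu i p \<alpha>))"

definition xvecA :: "(nat \<Rightarrow> 'v \<Rightarrow> 'v) \<Rightarrow> nat set \<Rightarrow> 'v::real_vector vpoly \<Rightarrow> 'v vpoly" where
  "xvecA e A p = (\<lambda>\<alpha>. \<Sum>i\<in>A. e i (mulx i p \<alpha>))"

definition gammaA :: "(nat \<Rightarrow> real) \<Rightarrow> nat set \<Rightarrow> real" where
  "gammaA mu A = real (card A) / 2 + (\<Sum>i\<in>A. mu i)"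

definition SA :: "(nat \<Rightarrow> 'v \<Rightarrow> 'v) \<Rightarrow> (nat \<Rightarrow> real) \<Rightarrow> nat set \<Rightarrow> 'v::real_vector vpoly \<Rightarrow> 'v vpoly" where
  "SA e mu A p = (\<lambda>\<alpha>. (1/2::real) *\<^sub>R
      (xvecA e A (DiracA e mu A p) \<alpha> - DiracA e mu A (xvecA e A p) \<alpha> - p \<alpha>))"

definition reflA :: "nat set \<Rightarrow> 'v::real_vector vpoly \<Rightarrow> 'v vpoly" where
  "reflA A p = (\<lambda>\<alpha>. ((\<Prod>i\<in>A. (-1::real) ^ Poly_Mapping.lookup \<alpha> i)) *\<^sub>R p \<alpha>)"

definition GammaOp :: "(nat \<Rightarrow> 'v \<Rightarrow> 'v) \<Rightarrow> (nat \<Rightarrow> real) \<Rightarrow> nat set \<Rightarrow> 'v::real_vector vpoly \<Rightarrow> 'v vpoly" where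
  "GammaOp e mu A p = SA e mu A (reflA A p)"

(* tilde I_a(z) = sum_m (z/2)^(2m) / (m! Gamma(m+a+1)), applied to an operator z,
   evaluated coefficientwise *)
definition Itil :: "real \<Rightarrow> ('v::real_normed_vector vpoly \<Rightarrow> 'v vpoly) \<Rightarrow> 'v vpoly \<Rightarrow> 'v vpoly" where
  "Itil a z f = (\<lambda>\<alpha>. suminf (\<lambda>m. (1 / (4 ^ m * fact m * Gamma (real m + a + 1))) *\<^sub>R (z ^^ (2*m)) f \<alpha>))"

definition CK :: "(nat \<Rightarrow> 'v \<Rightarrow> 'v) \<Rightarrow> (nat \<Rightarrow> real) \<Rightarrow> nat \<Rightarrow> 'v::real_normed_vector vpoly \<Rightarrow> 'v vpoly" where
  "CK e mu j f =
     (let z = (\<lambda>p. mulx j (DiracA e mu {1..<j} p)) in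
      (\<lambda>\<alpha>. Gamma (mu j + 1/2) *\<^sub>R
         (Itil (mu j - 1/2) z f \<alpha> + (1/2::real) *\<^sub>R e j (z (Itil (mu j + 1/2) z f) \<alpha>))))"

(* CKbuild ... m = B_{m+1}, where B_1 = x_1^{j_1} v, B_2 = CK_2[B_1],
   B_j = CK_j[x_[j-1]^{j_{j-1}} B_{j-1}] for j >= 3 *)
primrec CKbuild :: "(nat \<Rightarrow> 'v \<Rightarrow> 'v) \<Rightarrow> (nat \<Rightarrow> real) \<Rightarrow> (nat \<Rightarrow> nat) \<Rightarrow> 'v::real_normed_vector \<Rightarrow> nat \<Rightarrow> 'v vpoly" where
  "CKbuild e mu js v 0 = (\<lambda>\<alpha>. if \<alpha> = Poly_Mapping.single 1 (js 1) then v else 0)"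
| "CKbuild e mu js v (Suc m) =
     CK e mu (m + 2) ((if m = 0 then id else (xvecA e {1..m+1} ^^ js (m+1))) (CKbuild e mu js v m))"

definition Psi :: "(nat \<Rightarrow> 'v \<Rightarrow> 'v) \<Rightarrow> (nat \<Rightarrow> real) \<Rightarrow> nat \<Rightarrow> (nat \<Rightarrow> nat) \<Rightarrow> 'v::real_normed_vector \<Rightarrow> 'v vpoly" where
  "Psi e mu n js v = CKbuild e mu js v (n - 1)"

end

theory Submission
  imports Defs
begin

text \<open>
  Write \<open>S\<^sub>A = x\<^sub>A D\<^sub>A + E\<^sub>A + \<gamma>\<^sub>A - 1/2\<close> with the Euler operator \<open>E\<^sub>A\<close>; this follows from the
  anticommutator \<open>{x\<^sub>A, D\<^sub>A} = -2(E\<^sub>A + \<gamma>\<^sub>A)\<close>. Hence \<open>S\<^sub>A\<close> anticommutes with \<open>x\<^sub>A\<close> and \<open>D\<^sub>A\<close>, and so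
  does the reflection \<open>\<Prod>\<^sub>i\<^sub>\<in>\<^sub>A r\<^sub>i\<close>; thus \<open>\<Gamma>\<^sub>A\<close> commutes with \<open>x\<^sub>A\<close>, \<open>D\<^sub>A\<close> and with every operator
  acting in a variable outside \<open>A\<close>, hence with \<open>x\<^sub>B\<close>, \<open>D\<^sub>B\<close> for \<open>B \<supseteq> A\<close> and with \<open>CK\<^sub>j\<close> for
  \<open>j > |A|\<close>. On a polynomial \<open>p\<close> in \<open>x\<^sub>1,\<dots>,x\<^sub>\<ell>\<close>, homogeneous of degree \<open>d\<close> and annihilated by
  \<open>D\<^sub>[\<^sub>\<ell>\<^sub>]\<close>, the operator \<open>\<Gamma>\<^sub>[\<^sub>\<ell>\<^sub>]\<close> acts as \<open>(-1)\<^sup>d (d + \<gamma>\<^sub>[\<^sub>\<ell>\<^sub>] - 1/2)\<close>. The polynomial built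
  after the \<open>\<ell>\<close>-th CK extension is of this form with \<open>d = |j\<^sub>\<ell>\<^sub>-\<^sub>1|\<close>, because the generalised
  CK extension of any polynomial in \<open>x\<^sub>1,\<dots>,x\<^sub>j\<^sub>-\<^sub>1\<close> is monogenic: the two Bessel series are
  matched term by term through \<open>\<Gamma>(x + 1) = x \<Gamma>(x)\<close>. The remaining steps of the construction
  commute with \<open>\<Gamma>\<^sub>[\<^sub>\<ell>\<^sub>]\<close>.
\<close>

abbreviation \<delta> :: "nat \<Rightarrow> nat \<Rightarrow>\<^sub>0 nat" where "\<delta> i \<equiv> Poly_Mapping.single i (Suc 0)"

lemma add_delta_diff_delta: "\<alpha> + \<delta> i - \<delta> i = \<alpha>"
  by (rule poly_mapping_eqI) (auto simp: lookup_add lookup_minus lookup_single when_def)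

lemma diff_delta_add_delta: "Poly_Mapping.lookup \<alpha> i \<noteq> 0 \<Longrightarrow> \<alpha> - \<delta> i + \<delta> i = \<alpha>"
  by (rule poly_mapping_eqI) (auto simp: lookup_add lookup_minus lookup_single when_def)

lemma diff_delta_add_delta_commute:
  "i \<noteq> j \<Longrightarrow> Poly_Mapping.lookup \<alpha> j \<noteq> 0 \<Longrightarrow> \<alpha> - \<delta> j + \<delta> i = \<alpha> + \<delta> i - \<delta> j"
  by (rule poly_mapping_eqI) (auto simp: lookup_add lookup_minus lookup_single when_def)

lemma sum_lookup_diff_delta:
  assumes "finite A" "i \<in> A" "Poly_Mapping.lookup \<alpha> i \<noteq> 0"
  shows "(\<Sum>k\<in>A. Poly_Mapping.lookup (\<alpha> - \<delta> i) k) + 1 = (\<Sum>k\<in>A. Poly_Mapping.lookup \<alpha> k)"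
proof -
  have "(\<Sum>k\<in>A-{i}. Poly_Mapping.lookup (\<alpha> - \<delta> i) k) = (\<Sum>k\<in>A-{i}. Poly_Mapping.lookup \<alpha> k)"
    by (rule sum.cong) (auto simp: lookup_minus lookup_single when_def)
  then show ?thesis using assms by (simp add: sum.remove lookup_minus)
qed

lemma sum_lookup_add_delta:
  assumes "finite A" "i \<in> A"
  shows "(\<Sum>k\<in>A. Poly_Mapping.lookup (\<alpha> + \<delta> i) k) = (\<Sum>k\<in>A. Poly_Mapping.lookup \<alpha> k) + 1"
proof -
  have "(\<Sum>k\<in>A-{i}. Poly_Mapping.lookup (\<alpha> + \<delta> i) k) = (\<Sum>k\<in>A-{i}. Poly_Mapping.lookup \<alpha> k)"
    by (rule sum.cong) (auto simp: lookup_add lookup_single when_def)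
  then show ?thesis using assms by (simp add: sum.remove lookup_add)
qed

lemma sum_lookup_diff_delta_notin:
  "i \<notin> A \<Longrightarrow> (\<Sum>k\<in>A. Poly_Mapping.lookup (\<alpha> - \<delta> i) k) = (\<Sum>k\<in>A. Poly_Mapping.lookup \<alpha> k)"
  by (rule sum.cong) (auto simp: lookup_minus lookup_single when_def)

definition refl_sign :: "nat set \<Rightarrow> (nat \<Rightarrow>\<^sub>0 nat) \<Rightarrow> real" where
  "refl_sign A \<alpha> = (\<Prod>k\<in>A. (-1::real) ^ Poly_Mapping.lookup \<alpha> k)"

lemma reflA_apply: "reflA A p \<alpha> = refl_sign A \<alpha> *\<^sub>R p \<alpha>"
  by (simp add: reflA_def refl_sign_def)

lemma refl_sign_diff_delta:
  assumes "finite A" "i \<in> A" "Poly_Mapping.lookup \<alpha> i \<noteq> 0"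
  shows "refl_sign A (\<alpha> - \<delta> i) = - refl_sign A \<alpha>"
proof -
  have "(\<Prod>k\<in>A-{i}. (-1::real) ^ Poly_Mapping.lookup (\<alpha> - \<delta> i) k) = (\<Prod>k\<in>A-{i}. (-1::real) ^ Poly_Mapping.lookup \<alpha> k)"
    by (rule prod.cong) (auto simp: lookup_minus lookup_single when_def)
  moreover obtain m where "Poly_Mapping.lookup \<alpha> i = Suc m"
    using assms(3) not0_implies_Suc by blast
  ultimately show ?thesis
    unfolding refl_sign_def prod.remove[OF assms(1,2)] by (simp add: lookup_minus)
qed

lemma refl_sign_add_delta:
  assumes "finite A" "i \<in> A"
  shows "refl_sign A (\<alpha> + \<delta> i) = - refl_sign A \<alpha>"
proof -
  have "(\<Prod>k\<in>A-{i}. (-1::real) ^ Poly_Mapping.lookup (\<alpha> + \<delta> i) k) = (\<Prod>k\<in>A-{i}. (-1::real) ^ Poly_Mapping.lookup \<alpha> k)"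
    by (rule prod.cong) (auto simp: lookup_add lookup_single when_def)
  then show ?thesis unfolding refl_sign_def prod.remove[OF assms(1,2)] by (simp add: lookup_add)
qed

lemma refl_sign_diff_delta_notin: "i \<notin> A \<Longrightarrow> refl_sign A (\<alpha> - \<delta> i) = refl_sign A \<alpha>"
  unfolding refl_sign_def by (rule prod.cong) (auto simp: lookup_minus lookup_single when_def)

lemma refl_sign_add_delta_notin: "i \<notin> A \<Longrightarrow> refl_sign A (\<alpha> + \<delta> i) = refl_sign A \<alpha>"
  unfolding refl_sign_def by (rule prod.cong) (auto simp: lookup_add lookup_single when_def)

text \<open>On the monomial \<open>x\<^sup>\<alpha>\<close> the Dunkl operator acts by \<open>T\<^sub>i x\<^sup>\<alpha>\<^sup>+\<^sup>\<delta>\<^sup>i = dunkl_coeff mu i \<alpha>\<^sub>i x\<^sup>\<alpha>\<close>.\<close>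

definition dunkl_coeff :: "(nat \<Rightarrow> real) \<Rightarrow> nat \<Rightarrow> nat \<Rightarrow> real" where
  "dunkl_coeff mu i a = real a + 1 + mu i * (1 + (-1) ^ a)"

lemma dunkl_apply:
  "dunkl mu i p \<alpha> = dunkl_coeff mu i (Poly_Mapping.lookup \<alpha> i) *\<^sub>R p (\<alpha> + \<delta> i)"
proof -
  have "refl i p (\<alpha> + \<delta> i) = (- ((-1) ^ Poly_Mapping.lookup \<alpha> i)) *\<^sub>R p (\<alpha> + \<delta> i)"
    by (simp add: refl_def lookup_add)
  then show ?thesis
    by (simp add: dunkl_def dx_def divx_def dunkl_coeff_def lookup_add algebra_simps)
qed

lemma mulx_apply: "mulx i p \<alpha> = (if Poly_Mapping.lookup \<alpha> i = 0 then 0 else p (\<alpha> - \<delta> i))"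
  by (simp add: mulx_def)

lemma dunkl_coeff_adjacent_sum:
  "a \<noteq> 0 \<Longrightarrow> dunkl_coeff mu i (a - 1) + dunkl_coeff mu i a = 2 * real a + 1 + 2 * mu i"
  by (cases a) (simp_all add: dunkl_coeff_def algebra_simps)

lemma dunkl_coeff_even: "dunkl_coeff mu j (2*m) = real (2*m) + 1 + mu j * 2"
  by (simp add: dunkl_coeff_def)

lemma dunkl_coeff_odd: "dunkl_coeff mu j (Suc (2*m)) = real (Suc (2*m)) + 1"
  by (simp add: dunkl_coeff_def)

lemma dunkl_mulx_same:
  assumes "\<forall>\<alpha>. q \<alpha> \<noteq> 0 \<longrightarrow> Poly_Mapping.lookup \<alpha> j = k"
  shows "dunkl mu j (mulx j q) = (\<lambda>\<alpha>. dunkl_coeff mu j k *\<^sub>R q \<alpha>)"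
proof (rule ext)
  fix \<alpha>
  have "mulx j q (\<alpha> + \<delta> j) = q \<alpha>" by (simp add: mulx_apply lookup_add add_delta_diff_delta)
  then show "dunkl mu j (mulx j q) \<alpha> = dunkl_coeff mu j k *\<^sub>R q \<alpha>"
    unfolding dunkl_apply using assms by (cases "q \<alpha> = 0") auto
qed

lemma mulx_dunkl_anticomm:
  "mulx i (dunkl mu i p) \<alpha> + dunkl mu i (mulx i p) \<alpha> =
    (2 * real (Poly_Mapping.lookup \<alpha> i) + 1 + 2 * mu i) *\<^sub>R p \<alpha>"
proof (cases "Poly_Mapping.lookup \<alpha> i = 0")
  case True
  then show ?thesis
    by (simp add: mulx_apply dunkl_apply dunkl_coeff_def add_delta_diff_delta lookup_add)
next
  case False
  then show ?thesis
    by (simp add: mulx_apply dunkl_apply lookup_minus lookup_add diff_delta_add_delta add_delta_diff_delta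
        dunkl_coeff_adjacent_sum[OF False, symmetric] scaleR_add_left)
qed

lemma mulx_dunkl_commute: "i \<noteq> j \<Longrightarrow> mulx j (dunkl mu i p) = dunkl mu i (mulx j p)"
  by (auto simp: fun_eq_iff mulx_apply dunkl_apply lookup_add lookup_minus lookup_single when_def
      diff_delta_add_delta_commute)

lemma mulx_commute: "mulx i (mulx j p) = mulx j (mulx i p)"
  by (cases "i = j")
    (auto simp: fun_eq_iff mulx_apply lookup_minus lookup_single when_def
      Groups.cancel_ab_semigroup_add_class.diff_right_commute)

lemma dunkl_commute: "dunkl mu i (dunkl mu j p) = dunkl mu j (dunkl mu i p)"
  by (cases "i = j") (auto simp: fun_eq_iff dunkl_apply lookup_add lookup_single when_def add_ac)

definition cmult :: "(nat \<Rightarrow> 'v \<Rightarrow> 'v) \<Rightarrow> nat \<Rightarrow> 'v::real_vector vpoly \<Rightarrow> 'v vpoly" where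
  "cmult e i p = (\<lambda>\<alpha>. e i (p \<alpha>))"

definition euler :: "nat set \<Rightarrow> 'v::real_vector vpoly \<Rightarrow> 'v vpoly" where
  "euler A p = (\<lambda>\<alpha>. real (\<Sum>i\<in>A. Poly_Mapping.lookup \<alpha> i) *\<^sub>R p \<alpha>)"

definition euler_gamma :: "(nat \<Rightarrow> real) \<Rightarrow> nat set \<Rightarrow> 'v::real_vector vpoly \<Rightarrow> 'v vpoly" where
  "euler_gamma mu A p = (\<lambda>\<alpha>. euler A p \<alpha> + (gammaA mu A - 1/2) *\<^sub>R p \<alpha>)"

definition op_linear :: "('v::real_vector vpoly \<Rightarrow> 'w::real_vector vpoly) \<Rightarrow> bool" where
  "op_linear F \<longleftrightarrow> (\<forall>p q. F (\<lambda>\<alpha>. p \<alpha> + q \<alpha>) = (\<lambda>\<alpha>. F p \<alpha> + F q \<alpha>)) \<and>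
                   (\<forall>c p. F (\<lambda>\<alpha>. c *\<^sub>R p \<alpha>) = (\<lambda>\<alpha>. c *\<^sub>R F p \<alpha>))"

lemma op_linear_add: "op_linear F \<Longrightarrow> F (\<lambda>\<alpha>. p \<alpha> + q \<alpha>) = (\<lambda>\<alpha>. F p \<alpha> + F q \<alpha>)"
  by (simp add: op_linear_def)

lemma op_linear_scale: "op_linear F \<Longrightarrow> F (\<lambda>\<alpha>. c *\<^sub>R p \<alpha>) = (\<lambda>\<alpha>. c *\<^sub>R F p \<alpha>)"
  by (simp add: op_linear_def)

lemma op_linear_zero: "op_linear F \<Longrightarrow> F (\<lambda>\<alpha>. 0) = (\<lambda>\<alpha>. 0)"
  using op_linear_scale[of F 0 "\<lambda>\<alpha>. 0"] by simp

lemma op_linear_neg: "op_linear F \<Longrightarrow> F (\<lambda>\<alpha>. - p \<alpha>) = (\<lambda>\<alpha>. - F p \<alpha>)"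
  using op_linear_scale[of F "-1" p] by simp

lemma op_linear_diff: "op_linear F \<Longrightarrow> F (\<lambda>\<alpha>. p \<alpha> - q \<alpha>) = (\<lambda>\<alpha>. F p \<alpha> - F q \<alpha>)"
  using op_linear_add[of F p "\<lambda>\<alpha>. - q \<alpha>"] op_linear_neg[of F q] by simp

lemma op_linear_sum: "op_linear F \<Longrightarrow> F (\<lambda>\<alpha>. \<Sum>k\<in>K. g k \<alpha>) = (\<lambda>\<alpha>. \<Sum>k\<in>K. F (g k) \<alpha>)"
proof (induction K rule: infinite_finite_induct)
  case (insert x K)
  then show ?case using op_linear_add[of F "g x" "\<lambda>\<alpha>. \<Sum>k\<in>K. g k \<alpha>"] by simp
qed (simp_all add: op_linear_zero)

lemma op_linear_comp: "op_linear F \<Longrightarrow> op_linear G \<Longrightarrow> op_linear (\<lambda>p. F (G p))"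
  by (simp add: op_linear_def)

lemma op_linear_funpow:
  fixes F :: "'v::real_vector vpoly \<Rightarrow> 'v vpoly"
  shows "op_linear F \<Longrightarrow> op_linear (F ^^ k)"
  by (induction k) (simp_all add: op_linear_def)

lemma op_linear_scaleR: "op_linear (\<lambda>p. (\<lambda>\<alpha>. c *\<^sub>R p \<alpha>))"
  by (simp add: op_linear_def fun_eq_iff algebra_simps)

lemma op_linear_mulx: "op_linear (mulx i)"
  by (auto simp: op_linear_def mulx_def fun_eq_iff)

lemma op_linear_dunkl: "op_linear (dunkl mu i)"
  by (auto simp: op_linear_def dunkl_apply fun_eq_iff scaleR_add_right)

lemma op_linear_reflA: "op_linear (reflA A)"
  by (auto simp: op_linear_def reflA_def fun_eq_iff scaleR_add_right)

lemma funpow_commute: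
  assumes "\<And>p. F (z p) = z (F p)"
  shows "F ((z ^^ k) p) = (z ^^ k) (F p)"
  by (induction k) (auto simp: assms)

lemma op_linear_commute_xvecA:
  assumes "op_linear F" and "\<And>i q. i \<in> A \<Longrightarrow> F (cmult e i q) = cmult e i (F q)"
    and "\<And>i q. i \<in> A \<Longrightarrow> F (mulx i q) = mulx i (F q)"
  shows "F (xvecA e A p) = xvecA e A (F p)"
proof -
  have "xvecA e A q = (\<lambda>\<alpha>. \<Sum>i\<in>A. cmult e i (mulx i q) \<alpha>)" for q
    by (simp add: xvecA_def cmult_def)
  moreover have "F (cmult e i (mulx i q)) = cmult e i (mulx i (F q))" if "i \<in> A" for i q
    using assms(2,3) that by simp
  ultimately show ?thesis by (simp add: op_linear_sum[OF assms(1)] cong: sum.cong)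
qed

lemma op_linear_commute_DiracA:
  assumes "op_linear F" and "\<And>i q. i \<in> A \<Longrightarrow> F (cmult e i q) = cmult e i (F q)"
    and "\<And>i q. i \<in> A \<Longrightarrow> F (dunkl mu i q) = dunkl mu i (F q)"
  shows "F (DiracA e mu A p) = DiracA e mu A (F p)"
proof -
  have "DiracA e mu A q = (\<lambda>\<alpha>. \<Sum>i\<in>A. cmult e i (dunkl mu i q) \<alpha>)" for q
    by (simp add: DiracA_def cmult_def)
  moreover have "F (cmult e i (dunkl mu i q)) = cmult e i (dunkl mu i (F q))" if "i \<in> A" for i q
    using assms(2,3) that by simp
  ultimately show ?thesis by (simp add: op_linear_sum[OF assms(1)] cong: sum.cong)
qed

section \<open>Clifford-valued operators\<close>

locale clifford =
  fixes e :: "nat \<Rightarrow> 'v::real_normed_vector \<Rightarrow> 'v" and mu :: "nat \<Rightarrow> real" and n :: nat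
  assumes linear_e: "\<And>i. i \<in> {1..n} \<Longrightarrow> linear (e i)"
    and e_anticomm_rel: "\<And>i j w. i \<in> {1..n} \<Longrightarrow> j \<in> {1..n} \<Longrightarrow>
      e i (e j w) + e j (e i w) = (if i = j then (-2) *\<^sub>R w else 0)"
begin

lemma e_add: "i \<in> {1..n} \<Longrightarrow> e i (x + y) = e i x + e i y"
  by (rule linear_add[OF linear_e])

lemma e_scale: "i \<in> {1..n} \<Longrightarrow> e i (c *\<^sub>R x) = c *\<^sub>R e i x"
  by (rule linear_scale[OF linear_e])

lemma e_0: "i \<in> {1..n} \<Longrightarrow> e i 0 = 0"
  by (rule linear_0[OF linear_e])

lemma e_neg: "i \<in> {1..n} \<Longrightarrow> e i (- x) = - e i x"
  by (rule linear_neg[OF linear_e])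

lemma e_diff: "i \<in> {1..n} \<Longrightarrow> e i (x - y) = e i x - e i y"
  by (rule linear_diff[OF linear_e])

lemma e_sum: "i \<in> {1..n} \<Longrightarrow> e i (\<Sum>k\<in>S. f k) = (\<Sum>k\<in>S. e i (f k))"
  by (rule linear_sum[OF linear_e])

lemma e_square: "i \<in> {1..n} \<Longrightarrow> e i (e i w) = - w"
proof -
  assume i: "i \<in> {1..n}"
  have "(2::real) *\<^sub>R e i (e i w) = (2::real) *\<^sub>R (- w)"
    using e_anticomm_rel[OF i i, of w] by (simp add: scaleR_2)
  then show ?thesis by (metis scaleR_cancel_left zero_neq_numeral)
qed

lemma e_anticomm: "i \<in> {1..n} \<Longrightarrow> j \<in> {1..n} \<Longrightarrow> i \<noteq> j \<Longrightarrow> e i (e j w) = - e j (e i w)"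
  using e_anticomm_rel[of i j w] by (simp add: eq_neg_iff_add_eq_0)

lemma xvecA_apply:
  "xvecA e A p \<alpha> = (\<Sum>i\<in>A. e i (if Poly_Mapping.lookup \<alpha> i = 0 then 0 else p (\<alpha> - \<delta> i)))"
  by (simp add: xvecA_def mulx_apply)

lemma DiracA_apply:
  "DiracA e mu A p \<alpha> = (\<Sum>i\<in>A. e i (dunkl_coeff mu i (Poly_Mapping.lookup \<alpha> i) *\<^sub>R p (\<alpha> + \<delta> i)))"
  by (simp add: DiracA_def dunkl_apply)

lemma op_linear_cmult: "i \<in> {1..n} \<Longrightarrow> op_linear (cmult e i)"
  by (auto simp: op_linear_def cmult_def fun_eq_iff e_add e_scale)

lemma op_linear_xvecA: "A \<subseteq> {1..n} \<Longrightarrow> op_linear (xvecA e A)"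
  unfolding op_linear_def xvecA_def op_linear_add[OF op_linear_mulx] op_linear_scale[OF op_linear_mulx]
  by (auto simp: fun_eq_iff e_add e_scale subset_iff sum.distrib scaleR_sum_right intro!: sum.cong)

lemma op_linear_DiracA: "A \<subseteq> {1..n} \<Longrightarrow> op_linear (DiracA e mu A)"
  unfolding op_linear_def DiracA_def op_linear_add[OF op_linear_dunkl] op_linear_scale[OF op_linear_dunkl]
  by (auto simp: fun_eq_iff e_add e_scale subset_iff sum.distrib scaleR_sum_right intro!: sum.cong)

lemma op_linear_SA:
  assumes A: "A \<subseteq> {1..n}"
  shows "op_linear (SA e mu A)"
proof -
  note X = op_linear_xvecA[OF A] and D = op_linear_DiracA[OF A]
  show ?thesis unfolding op_linear_def SA_def
    by (simp add: op_linear_add[OF X] op_linear_add[OF D] op_linear_scale[OF X] op_linear_scale[OF D]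
        algebra_simps)
qed

lemma op_linear_GammaOp: "A \<subseteq> {1..n} \<Longrightarrow> op_linear (GammaOp e mu A)"
  unfolding GammaOp_def[abs_def] by (rule op_linear_comp[OF op_linear_SA op_linear_reflA])

lemma xvecA_DiracA_anticommutator:
  assumes A: "A \<subseteq> {1..n}"
  shows "xvecA e A (DiracA e mu A p) \<alpha> + DiracA e mu A (xvecA e A p) \<alpha> =
     - (2 * real (\<Sum>i\<in>A. Poly_Mapping.lookup \<alpha> i) + real (card A) + 2 * (\<Sum>i\<in>A. mu i)) *\<^sub>R p \<alpha>"
proof -
  have fin: "finite A" using A finite_subset by blast
  have xD: "xvecA e A (DiracA e mu A p) \<alpha> = (\<Sum>j\<in>A. \<Sum>i\<in>A. e j (e i (mulx j (dunkl mu i p) \<alpha>)))"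
    unfolding xvecA_def DiracA_def
    by (rule sum.cong[OF refl]) (use A in \<open>auto simp: mulx_apply e_sum e_0 subset_iff\<close>)
  have Dx: "DiracA e mu A (xvecA e A p) \<alpha> = (\<Sum>i\<in>A. \<Sum>j\<in>A. e i (e j (dunkl mu i (mulx j p) \<alpha>)))"
    unfolding xvecA_def DiracA_def dunkl_apply scaleR_sum_right
    by (rule sum.cong[OF refl]) (use A in \<open>auto simp: e_sum e_scale subset_iff intro!: sum.cong\<close>)
  have pair: "e j (e i (mulx j (dunkl mu i p) \<alpha>)) + e i (e j (dunkl mu i (mulx j p) \<alpha>)) =
      (if i = j then - (2 * real (Poly_Mapping.lookup \<alpha> i) + 1 + 2 * mu i) *\<^sub>R p \<alpha> else 0)"
    if "i \<in> A" "j \<in> A" for i j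
  proof -
    have ij: "i \<in> {1..n}" "j \<in> {1..n}" using that A by auto
    show ?thesis
    proof (cases "i = j")
      case True
      have "e i (e i (mulx i (dunkl mu i p) \<alpha>)) + e i (e i (dunkl mu i (mulx i p) \<alpha>)) =
          - (mulx i (dunkl mu i p) \<alpha> + dunkl mu i (mulx i p) \<alpha>)"
        using ij by (simp add: e_square)
      then show ?thesis using True by (simp only: mulx_dunkl_anticomm scaleR_minus_left) simp
    next
      case False
      then show ?thesis using ij e_anticomm[of j i] by (simp add: mulx_dunkl_commute)
    qed
  qed
  have "xvecA e A (DiracA e mu A p) \<alpha> + DiracA e mu A (xvecA e A p) \<alpha> =
      (\<Sum>i\<in>A. \<Sum>j\<in>A. e j (e i (mulx j (dunkl mu i p) \<alpha>)) + e i (e j (dunkl mu i (mulx j p) \<alpha>)))"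
    unfolding xD Dx sum.distrib by (subst sum.swap) simp
  also have "\<dots> = (\<Sum>i\<in>A. - (2 * real (Poly_Mapping.lookup \<alpha> i) + 1 + 2 * mu i) *\<^sub>R p \<alpha>)"
    using fin by (simp add: pair if_distrib cong: sum.cong)
  also have "\<dots> = - (2 * real (\<Sum>i\<in>A. Poly_Mapping.lookup \<alpha> i) + real (card A) + 2 * (\<Sum>i\<in>A. mu i)) *\<^sub>R p \<alpha>"
    by (simp add: scaleR_sum_left[symmetric] sum.distrib sum_distrib_left sum_negf sum_subtractf)
  finally show ?thesis .
qed

lemma DiracA_xvecA:
  assumes A: "A \<subseteq> {1..n}"
  shows "DiracA e mu A (xvecA e A q) =
    (\<lambda>\<alpha>. - xvecA e A (DiracA e mu A q) \<alpha> - 2 *\<^sub>R euler_gamma mu A q \<alpha> - q \<alpha>)"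
proof (rule ext)
  fix \<alpha>
  let ?K = "2 * real (\<Sum>i\<in>A. Poly_Mapping.lookup \<alpha> i) + real (card A) + 2 * (\<Sum>i\<in>A. mu i)"
  have anticomm: "DiracA e mu A (xvecA e A q) \<alpha> = - ?K *\<^sub>R q \<alpha> - xvecA e A (DiracA e mu A q) \<alpha>"
    by (metis xvecA_DiracA_anticommutator[OF A] add_diff_cancel_left')
  have "?K *\<^sub>R q \<alpha> = 2 *\<^sub>R euler_gamma mu A q \<alpha> + q \<alpha>"
    by (simp add: euler_gamma_def euler_def gammaA_def algebra_simps del: of_nat_sum)
  then show "DiracA e mu A (xvecA e A q) \<alpha> =
      - xvecA e A (DiracA e mu A q) \<alpha> - 2 *\<^sub>R euler_gamma mu A q \<alpha> - q \<alpha>"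
    unfolding anticomm scaleR_minus_left by (simp add: algebra_simps)
qed

lemma SA_eq:
  assumes A: "A \<subseteq> {1..n}"
  shows "SA e mu A q = (\<lambda>\<alpha>. xvecA e A (DiracA e mu A q) \<alpha> + euler_gamma mu A q \<alpha>)"
proof (rule ext)
  fix \<alpha>
  let ?y = "xvecA e A (DiracA e mu A q) \<alpha> + euler_gamma mu A q \<alpha>"
  have "xvecA e A (DiracA e mu A q) \<alpha> - DiracA e mu A (xvecA e A q) \<alpha> - q \<alpha> = 2 *\<^sub>R ?y"
    by (simp add: DiracA_xvecA[OF A] algebra_simps scaleR_2)
  then show "SA e mu A q \<alpha> = ?y"
    unfolding SA_def by simp
qed

lemma euler_xvecA:
  assumes A: "A \<subseteq> {1..n}"
  shows "euler A (xvecA e A p) = (\<lambda>\<alpha>. xvecA e A (euler A p) \<alpha> + xvecA e A p \<alpha>)"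
proof (rule ext)
  fix \<alpha>
  have fin: "finite A" using A finite_subset by blast
  have "xvecA e A (euler A p) \<alpha> + xvecA e A p \<alpha> = (\<Sum>i\<in>A. e i (if Poly_Mapping.lookup \<alpha> i = 0 then 0
      else real (\<Sum>k\<in>A. Poly_Mapping.lookup \<alpha> k) *\<^sub>R p (\<alpha> - \<delta> i)))"
    unfolding xvecA_apply sum.distrib[symmetric]
  proof (rule sum.cong[OF refl])
    fix i assume i: "i \<in> A"
    then have iA: "i \<in> {1..n}" using A by auto
    show "e i (if Poly_Mapping.lookup \<alpha> i = 0 then 0 else euler A p (\<alpha> - \<delta> i)) +
          e i (if Poly_Mapping.lookup \<alpha> i = 0 then 0 else p (\<alpha> - \<delta> i)) =
          e i (if Poly_Mapping.lookup \<alpha> i = 0 then 0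
            else real (\<Sum>k\<in>A. Poly_Mapping.lookup \<alpha> k) *\<^sub>R p (\<alpha> - \<delta> i))"
    proof (cases "Poly_Mapping.lookup \<alpha> i = 0")
      case True then show ?thesis using iA by (simp add: e_0)
    next
      case False
      have "real (\<Sum>k\<in>A. Poly_Mapping.lookup \<alpha> k) = real (\<Sum>k\<in>A. Poly_Mapping.lookup (\<alpha> - \<delta> i) k) + 1"
        using arg_cong[OF sum_lookup_diff_delta[OF fin i False], of real] by (simp del: of_nat_sum)
      then show ?thesis
        using False iA by (simp add: euler_def scaleR_add_left del: of_nat_sum flip: e_add)
    qed
  qed
  also have "\<dots> = euler A (xvecA e A p) \<alpha>"
    unfolding euler_def xvecA_apply scaleR_sum_right
    by (rule sum.cong[OF refl]) (use A in \<open>auto simp: e_scale e_0 subset_iff\<close>)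
  finally show "euler A (xvecA e A p) \<alpha> = xvecA e A (euler A p) \<alpha> + xvecA e A p \<alpha>" by simp
qed

lemma DiracA_euler:
  assumes A: "A \<subseteq> {1..n}"
  shows "DiracA e mu A (euler A p) = (\<lambda>\<alpha>. euler A (DiracA e mu A p) \<alpha> + DiracA e mu A p \<alpha>)"
proof (rule ext)
  fix \<alpha>
  have fin: "finite A" using A finite_subset by blast
  have "DiracA e mu A (euler A p) \<alpha> = (\<Sum>i\<in>A. (real (\<Sum>k\<in>A. Poly_Mapping.lookup \<alpha> k) + 1) *\<^sub>R
      e i (dunkl_coeff mu i (Poly_Mapping.lookup \<alpha> i) *\<^sub>R p (\<alpha> + \<delta> i)))"
    unfolding DiracA_apply
  proof (rule sum.cong[OF refl])
    fix i assume i: "i \<in> A"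
    then have "i \<in> {1..n}" using A by auto
    then show "e i (dunkl_coeff mu i (Poly_Mapping.lookup \<alpha> i) *\<^sub>R euler A p (\<alpha> + \<delta> i)) =
      (real (\<Sum>k\<in>A. Poly_Mapping.lookup \<alpha> k) + 1) *\<^sub>R
        e i (dunkl_coeff mu i (Poly_Mapping.lookup \<alpha> i) *\<^sub>R p (\<alpha> + \<delta> i))"
      by (simp add: euler_def sum_lookup_add_delta[OF fin i] e_scale del: of_nat_sum)
  qed
  also have "\<dots> = euler A (DiracA e mu A p) \<alpha> + DiracA e mu A p \<alpha>"
    by (simp add: euler_def DiracA_apply scaleR_sum_right scaleR_add_left sum.distrib)
  finally show "DiracA e mu A (euler A p) \<alpha> = euler A (DiracA e mu A p) \<alpha> + DiracA e mu A p \<alpha>" .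
qed

lemma euler_gamma_xvecA:
  assumes A: "A \<subseteq> {1..n}"
  shows "euler_gamma mu A (xvecA e A q) = (\<lambda>\<alpha>. xvecA e A (euler_gamma mu A q) \<alpha> + xvecA e A q \<alpha>)"
proof -
  note X = op_linear_xvecA[OF A]
  show ?thesis unfolding euler_gamma_def euler_xvecA[OF A]
    by (simp add: op_linear_add[OF X] op_linear_diff[OF X] op_linear_scale[OF X] fun_eq_iff algebra_simps)
qed

lemma DiracA_euler_gamma:
  assumes A: "A \<subseteq> {1..n}"
  shows "DiracA e mu A (euler_gamma mu A q) =
    (\<lambda>\<alpha>. euler_gamma mu A (DiracA e mu A q) \<alpha> + DiracA e mu A q \<alpha>)"
proof -
  note D = op_linear_DiracA[OF A]
  show ?thesis unfolding euler_gamma_def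
    by (simp add: op_linear_add[OF D] op_linear_diff[OF D] op_linear_scale[OF D] DiracA_euler[OF A] fun_eq_iff algebra_simps)
qed

lemma SA_xvecA_anticomm:
  assumes A: "A \<subseteq> {1..n}"
  shows "SA e mu A (xvecA e A q) = (\<lambda>\<alpha>. - xvecA e A (SA e mu A q) \<alpha>)"
proof -
  note X = op_linear_xvecA[OF A]
  show ?thesis unfolding SA_eq[OF A] DiracA_xvecA[OF A] euler_gamma_xvecA[OF A]
    by (simp add: op_linear_add[OF X] op_linear_diff[OF X] op_linear_neg[OF X] op_linear_scale[OF X]
        fun_eq_iff algebra_simps scaleR_2)
qed

lemma SA_DiracA_anticomm:
  assumes A: "A \<subseteq> {1..n}"
  shows "SA e mu A (DiracA e mu A q) = (\<lambda>\<alpha>. - DiracA e mu A (SA e mu A q) \<alpha>)"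
proof -
  note D = op_linear_DiracA[OF A]
  show ?thesis unfolding SA_eq[OF A]
    by (simp add: op_linear_add[OF D] op_linear_diff[OF D] op_linear_neg[OF D] op_linear_scale[OF D]
        DiracA_xvecA[OF A] DiracA_euler_gamma[OF A] fun_eq_iff algebra_simps scaleR_2)
qed

lemma reflA_xvecA:
  assumes A: "A \<subseteq> {1..n}"
  shows "reflA A (xvecA e A p) = (\<lambda>\<alpha>. - xvecA e A (reflA A p) \<alpha>)"
proof (rule ext)
  fix \<alpha>
  have fin: "finite A" using A finite_subset by blast
  show "reflA A (xvecA e A p) \<alpha> = - xvecA e A (reflA A p) \<alpha>"
    unfolding reflA_apply xvecA_apply scaleR_sum_right sum_negf[symmetric]
  proof (rule sum.cong[OF refl])
    fix i assume i: "i \<in> A"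
    then have "i \<in> {1..n}" using A by auto
    then show "refl_sign A \<alpha> *\<^sub>R e i (if Poly_Mapping.lookup \<alpha> i = 0 then 0 else p (\<alpha> - \<delta> i)) =
        - e i (if Poly_Mapping.lookup \<alpha> i = 0 then 0 else refl_sign A (\<alpha> - \<delta> i) *\<^sub>R p (\<alpha> - \<delta> i))"
      using refl_sign_diff_delta[OF fin i] by (auto simp: e_0 e_scale e_neg)
  qed
qed

lemma reflA_DiracA:
  assumes A: "A \<subseteq> {1..n}"
  shows "reflA A (DiracA e mu A p) = (\<lambda>\<alpha>. - DiracA e mu A (reflA A p) \<alpha>)"
proof (rule ext)
  fix \<alpha>
  have fin: "finite A" using A finite_subset by blast
  show "reflA A (DiracA e mu A p) \<alpha> = - DiracA e mu A (reflA A p) \<alpha>"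
    unfolding reflA_apply DiracA_apply scaleR_sum_right sum_negf[symmetric]
  proof (rule sum.cong[OF refl])
    fix i assume i: "i \<in> A"
    then have "i \<in> {1..n}" using A by auto
    then show "refl_sign A \<alpha> *\<^sub>R e i (dunkl_coeff mu i (Poly_Mapping.lookup \<alpha> i) *\<^sub>R p (\<alpha> + \<delta> i)) =
        - e i (dunkl_coeff mu i (Poly_Mapping.lookup \<alpha> i) *\<^sub>R (refl_sign A (\<alpha> + \<delta> i) *\<^sub>R p (\<alpha> + \<delta> i)))"
      using refl_sign_add_delta[OF fin i] by (auto simp: e_scale e_neg)
  qed
qed

lemma GammaOp_xvecA:
  assumes A: "A \<subseteq> {1..n}"
  shows "GammaOp e mu A (xvecA e A p) = xvecA e A (GammaOp e mu A p)"
  unfolding GammaOp_def reflA_xvecA[OF A] op_linear_neg[OF op_linear_SA[OF A]] SA_xvecA_anticomm[OF A]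
  by simp

lemma GammaOp_DiracA:
  assumes A: "A \<subseteq> {1..n}"
  shows "GammaOp e mu A (DiracA e mu A p) = DiracA e mu A (GammaOp e mu A p)"
  unfolding GammaOp_def reflA_DiracA[OF A] op_linear_neg[OF op_linear_SA[OF A]] SA_DiracA_anticomm[OF A]
  by simp

section \<open>Operators in variables outside \<open>A\<close>\<close>

lemma xvecA_cmult:
  assumes A: "A \<subseteq> {1..n}" and j: "j \<in> {1..n}" "j \<notin> A"
  shows "xvecA e A (cmult e j p) = (\<lambda>\<alpha>. - cmult e j (xvecA e A p) \<alpha>)"
proof (rule ext)
  fix \<alpha>
  show "xvecA e A (cmult e j p) \<alpha> = - cmult e j (xvecA e A p) \<alpha>"
    unfolding xvecA_apply cmult_def e_sum[OF j(1)] sum_negf[symmetric]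
  proof (rule sum.cong[OF refl])
    fix i assume "i \<in> A"
    then have "i \<in> {1..n}" "i \<noteq> j" using A j by auto
    then show "e i (if Poly_Mapping.lookup \<alpha> i = 0 then 0 else e j (p (\<alpha> - \<delta> i))) =
          - e j (e i (if Poly_Mapping.lookup \<alpha> i = 0 then 0 else p (\<alpha> - \<delta> i)))"
      using j e_anticomm[of j i] by (auto simp: e_0)
  qed
qed

lemma DiracA_cmult:
  assumes A: "A \<subseteq> {1..n}" and j: "j \<in> {1..n}" "j \<notin> A"
  shows "DiracA e mu A (cmult e j p) = (\<lambda>\<alpha>. - cmult e j (DiracA e mu A p) \<alpha>)"
proof (rule ext)
  fix \<alpha>
  show "DiracA e mu A (cmult e j p) \<alpha> = - cmult e j (DiracA e mu A p) \<alpha>"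
    unfolding DiracA_apply cmult_def e_sum[OF j(1)] sum_negf[symmetric]
  proof (rule sum.cong[OF refl])
    fix i assume "i \<in> A"
    then have "i \<in> {1..n}" "i \<noteq> j" using A j by auto
    then show "e i (dunkl_coeff mu i (Poly_Mapping.lookup \<alpha> i) *\<^sub>R e j (p (\<alpha> + \<delta> i))) =
          - e j (e i (dunkl_coeff mu i (Poly_Mapping.lookup \<alpha> i) *\<^sub>R p (\<alpha> + \<delta> i)))"
      using j e_anticomm[of j i] by (auto simp: e_scale)
  qed
qed

lemma GammaOp_cmult:
  assumes A: "A \<subseteq> {1..n}" and j: "j \<in> {1..n}" "j \<notin> A"
  shows "GammaOp e mu A (cmult e j p) = cmult e j (GammaOp e mu A p)"
proof -
  have "reflA A (cmult e j p) = cmult e j (reflA A p)"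
    by (simp add: fun_eq_iff reflA_apply cmult_def e_scale[OF j(1)])
  moreover have "SA e mu A (cmult e j q) = cmult e j (SA e mu A q)" for q
    unfolding SA_def xvecA_cmult[OF A j] DiracA_cmult[OF A j]
      op_linear_neg[OF op_linear_xvecA[OF A]] op_linear_neg[OF op_linear_DiracA[OF A]]
      xvecA_cmult[OF A j] DiracA_cmult[OF A j]
    by (simp add: fun_eq_iff cmult_def e_scale[OF j(1)] e_diff[OF j(1)])
  ultimately show ?thesis by (simp add: GammaOp_def)
qed

lemma mulx_cmult: "i \<in> {1..n} \<Longrightarrow> mulx j (cmult e i q) = cmult e i (mulx j q)"
  by (simp add: fun_eq_iff mulx_apply cmult_def e_0)

lemma dunkl_cmult: "i \<in> {1..n} \<Longrightarrow> dunkl mu j (cmult e i q) = cmult e i (dunkl mu j q)"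
  by (simp add: fun_eq_iff dunkl_apply cmult_def e_scale)

lemma xvecA_mulx:
  assumes A: "A \<subseteq> {1..n}" and j: "j \<notin> A"
  shows "xvecA e A (mulx j p) = mulx j (xvecA e A p)"
  by (rule op_linear_commute_xvecA[OF op_linear_mulx, symmetric])
    (use A in \<open>auto simp: mulx_cmult mulx_commute\<close>)

lemma DiracA_mulx:
  assumes A: "A \<subseteq> {1..n}" and j: "j \<notin> A"
  shows "DiracA e mu A (mulx j p) = mulx j (DiracA e mu A p)"
  by (rule op_linear_commute_DiracA[OF op_linear_mulx, symmetric])
    (use A j in \<open>auto simp: mulx_cmult intro!: mulx_dunkl_commute\<close>)

lemma xvecA_dunkl:
  assumes A: "A \<subseteq> {1..n}" and j: "j \<notin> A"
  shows "xvecA e A (dunkl mu j p) = dunkl mu j (xvecA e A p)"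
  by (rule op_linear_commute_xvecA[OF op_linear_dunkl, symmetric])
    (use A j in \<open>auto simp: dunkl_cmult intro!: mulx_dunkl_commute[symmetric]\<close>)

lemma DiracA_dunkl:
  assumes A: "A \<subseteq> {1..n}" and j: "j \<notin> A"
  shows "DiracA e mu A (dunkl mu j p) = dunkl mu j (DiracA e mu A p)"
  by (rule op_linear_commute_DiracA[OF op_linear_dunkl, symmetric])
    (use A in \<open>auto simp: dunkl_cmult dunkl_commute\<close>)

lemma GammaOp_mulx:
  assumes A: "A \<subseteq> {1..n}" and j: "j \<notin> A"
  shows "GammaOp e mu A (mulx j p) = mulx j (GammaOp e mu A p)"
proof -
  have reflA_comm: "reflA A (mulx j p) = mulx j (reflA A p)"
    using j by (simp add: fun_eq_iff reflA_apply mulx_apply refl_sign_diff_delta_notin)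
  show ?thesis
    unfolding GammaOp_def reflA_comm SA_def xvecA_mulx[OF A j] DiracA_mulx[OF A j]
      op_linear_diff[OF op_linear_mulx] op_linear_scale[OF op_linear_mulx] ..
qed

lemma GammaOp_dunkl:
  assumes A: "A \<subseteq> {1..n}" and j: "j \<notin> A"
  shows "GammaOp e mu A (dunkl mu j p) = dunkl mu j (GammaOp e mu A p)"
proof -
  have reflA_comm: "reflA A (dunkl mu j p) = dunkl mu j (reflA A p)"
    using j by (simp add: fun_eq_iff reflA_apply dunkl_apply refl_sign_add_delta_notin)
  show ?thesis
    unfolding GammaOp_def reflA_comm SA_def xvecA_dunkl[OF A j] DiracA_dunkl[OF A j]
      op_linear_diff[OF op_linear_dunkl] op_linear_scale[OF op_linear_dunkl] ..
qed

lemma GammaOp_DiracA_disjoint: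
  assumes A: "A \<subseteq> {1..n}" and C: "C \<subseteq> {1..n}" "A \<inter> C = {}"
  shows "GammaOp e mu A (DiracA e mu C p) = DiracA e mu C (GammaOp e mu A p)"
  by (rule op_linear_commute_DiracA[OF op_linear_GammaOp[OF A]])
    (use C in \<open>auto intro!: GammaOp_cmult[OF A] GammaOp_dunkl[OF A]\<close>)

lemma GammaOp_xvecA_disjoint:
  assumes A: "A \<subseteq> {1..n}" and C: "C \<subseteq> {1..n}" "A \<inter> C = {}"
  shows "GammaOp e mu A (xvecA e C p) = xvecA e C (GammaOp e mu A p)"
  by (rule op_linear_commute_xvecA[OF op_linear_GammaOp[OF A]])
    (use C in \<open>auto intro!: GammaOp_cmult[OF A] GammaOp_mulx[OF A]\<close>)

lemma GammaOp_DiracA_superset: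
  assumes A: "A \<subseteq> B" and B: "B \<subseteq> {1..n}"
  shows "GammaOp e mu A (DiracA e mu B p) = DiracA e mu B (GammaOp e mu A p)"
proof -
  have A': "A \<subseteq> {1..n}" using A B by auto
  have fin: "finite A" "finite (B - A)" using A' B by (auto intro: finite_subset)
  have "DiracA e mu B q = (\<lambda>\<alpha>. DiracA e mu A q \<alpha> + DiracA e mu (B - A) q \<alpha>)" for q
    unfolding DiracA_def using fin A by (simp add: sum.subset_diff[of A B] add.commute)
  moreover have "GammaOp e mu A (DiracA e mu (B - A) q) = DiracA e mu (B - A) (GammaOp e mu A q)" for q
    by (rule GammaOp_DiracA_disjoint) (use A' B in auto)
  ultimately show ?thesis
    by (simp add: op_linear_add[OF op_linear_GammaOp[OF A']] GammaOp_DiracA[OF A'])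
qed

lemma GammaOp_xvecA_superset:
  assumes A: "A \<subseteq> B" and B: "B \<subseteq> {1..n}"
  shows "GammaOp e mu A (xvecA e B p) = xvecA e B (GammaOp e mu A p)"
proof -
  have A': "A \<subseteq> {1..n}" using A B by auto
  have fin: "finite A" "finite (B - A)" using A' B by (auto intro: finite_subset)
  have "xvecA e B q = (\<lambda>\<alpha>. xvecA e A q \<alpha> + xvecA e (B - A) q \<alpha>)" for q
    unfolding xvecA_def using fin A by (simp add: sum.subset_diff[of A B] add.commute)
  moreover have "GammaOp e mu A (xvecA e (B - A) q) = xvecA e (B - A) (GammaOp e mu A q)" for q
    by (rule GammaOp_xvecA_disjoint) (use A' B in auto)
  ultimately show ?thesis
    by (simp add: op_linear_add[OF op_linear_GammaOp[OF A']] GammaOp_xvecA[OF A'])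
qed

end

definition homogeneous_in :: "nat \<Rightarrow> nat \<Rightarrow> 'v::real_vector vpoly \<Rightarrow> bool" where
  "homogeneous_in j d p \<longleftrightarrow> (\<forall>\<alpha>. p \<alpha> \<noteq> 0 \<longrightarrow>
     (\<forall>i. i \<notin> {1..j} \<longrightarrow> Poly_Mapping.lookup \<alpha> i = 0) \<and> (\<Sum>i\<in>{1..j}. Poly_Mapping.lookup \<alpha> i) = d)"

definition homogeneous_in_top :: "nat \<Rightarrow> nat \<Rightarrow> nat \<Rightarrow> 'v::real_vector vpoly \<Rightarrow> bool" where
  "homogeneous_in_top j a d p \<longleftrightarrow> (\<forall>\<alpha>. p \<alpha> \<noteq> 0 \<longrightarrow>
     (\<forall>i. i \<notin> {1..j} \<longrightarrow> Poly_Mapping.lookup \<alpha> i = 0) \<and> Poly_Mapping.lookup \<alpha> j = a \<and>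
     (\<Sum>i\<in>{1..<j}. Poly_Mapping.lookup \<alpha> i) + a = d)"

definition ckz :: "(nat \<Rightarrow> 'v \<Rightarrow> 'v) \<Rightarrow> (nat \<Rightarrow> real) \<Rightarrow> nat \<Rightarrow> 'v::real_vector vpoly \<Rightarrow> 'v vpoly" where
  "ckz e mu j p = mulx j (DiracA e mu {1..<j} p)"

lemma homogeneous_in_top_0:
  assumes "2 \<le> j" "homogeneous_in (j - 1) d f" shows "homogeneous_in_top j 0 d f"
proof -
  have "{1..j-1} = {1..<j}" using assms(1) by auto
  then show ?thesis using assms(2) unfolding homogeneous_in_def homogeneous_in_top_def by auto
qed

lemma homogeneous_in_top_vanish: "homogeneous_in_top j a d p \<Longrightarrow> d < a \<Longrightarrow> p = (\<lambda>\<alpha>. 0)"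
  unfolding homogeneous_in_top_def by fastforce

lemma homogeneous_in_top_imp_homogeneous_in:
  assumes "1 \<le> j" "homogeneous_in_top j a d p" shows "homogeneous_in j d p"
proof -
  have "{1..j} = insert j {1..<j}" using assms(1) by auto
  then show ?thesis
    using assms(2) unfolding homogeneous_in_def homogeneous_in_top_def by (auto simp: add.commute)
qed

lemma homogeneous_in_add:
  "homogeneous_in j d p \<Longrightarrow> homogeneous_in j d q \<Longrightarrow> homogeneous_in j d (\<lambda>\<alpha>. p \<alpha> + q \<alpha>)"
  unfolding homogeneous_in_def by (metis add.right_neutral)

lemma homogeneous_in_scale: "homogeneous_in j d p \<Longrightarrow> homogeneous_in j d (\<lambda>\<alpha>. c *\<^sub>R p \<alpha>)"
  unfolding homogeneous_in_def by (metis scaleR_zero_right)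

lemma homogeneous_in_sum:
  "(\<And>k. k \<in> K \<Longrightarrow> homogeneous_in j d (g k)) \<Longrightarrow> homogeneous_in j d (\<lambda>\<alpha>. \<Sum>k\<in>K. g k \<alpha>)"
  by (induction K rule: infinite_finite_induct)
    (simp_all add: homogeneous_in_add, simp_all add: homogeneous_in_def)

context clifford
begin

lemma homogeneous_in_e: "i \<in> {1..n} \<Longrightarrow> homogeneous_in j d p \<Longrightarrow> homogeneous_in j d (\<lambda>\<alpha>. e i (p \<alpha>))"
  unfolding homogeneous_in_def by (metis e_0)

lemma DiracA_nonzero:
  assumes A: "A \<subseteq> {1..n}" and "DiracA e mu A p \<alpha> \<noteq> 0"
  shows "\<exists>i\<in>A. p (\<alpha> + \<delta> i) \<noteq> 0"
proof (rule ccontr)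
  assume "\<not> ?thesis"
  then have "DiracA e mu A p \<alpha> = 0"
    unfolding DiracA_apply using A by (auto intro!: sum.neutral simp: e_0 subset_iff)
  with assms(2) show False by simp
qed

lemma xvecA_nonzero:
  assumes A: "A \<subseteq> {1..n}" and "xvecA e A p \<alpha> \<noteq> 0"
  shows "\<exists>i\<in>A. Poly_Mapping.lookup \<alpha> i \<noteq> 0 \<and> p (\<alpha> - \<delta> i) \<noteq> 0"
proof (rule ccontr)
  assume "\<not> ?thesis"
  then have "xvecA e A p \<alpha> = 0"
    unfolding xvecA_apply using A by (auto intro!: sum.neutral simp: e_0 subset_iff)
  with assms(2) show False by simp
qed

lemma homogeneous_in_xvecA:
  assumes j: "j \<le> n" and h: "homogeneous_in j d p"
  shows "homogeneous_in j (Suc d) (xvecA e {1..j} p)"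
  unfolding homogeneous_in_def
proof (intro allI impI)
  fix \<alpha> assume "xvecA e {1..j} p \<alpha> \<noteq> 0"
  then obtain i where i: "i \<in> {1..j}" "Poly_Mapping.lookup \<alpha> i \<noteq> 0" "p (\<alpha> - \<delta> i) \<noteq> 0"
    using xvecA_nonzero[of "{1..j}" p \<alpha>] j by auto
  have k: "\<forall>k. k \<notin> {1..j} \<longrightarrow> Poly_Mapping.lookup (\<alpha> - \<delta> i) k = 0"
    and s: "(\<Sum>k\<in>{1..j}. Poly_Mapping.lookup (\<alpha> - \<delta> i) k) = d"
    using h i(3) unfolding homogeneous_in_def by auto
  have "Poly_Mapping.lookup \<alpha> k = 0" if "k \<notin> {1..j}" for k
    using k that i(1) by (auto simp: lookup_minus lookup_single when_def split: if_splits)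
  moreover have "(\<Sum>k\<in>{1..j}. Poly_Mapping.lookup \<alpha> k) = Suc d"
    using sum_lookup_diff_delta[of "{1..j}" i \<alpha>] i s by simp
  ultimately show "(\<forall>k. k \<notin> {1..j} \<longrightarrow> Poly_Mapping.lookup \<alpha> k = 0) \<and>
      (\<Sum>k\<in>{1..j}. Poly_Mapping.lookup \<alpha> k) = Suc d" by blast
qed

lemma homogeneous_in_xvecA_funpow:
  assumes "j \<le> n" "homogeneous_in j d p"
  shows "homogeneous_in j (d + k) ((xvecA e {1..j} ^^ k) p)"
proof (induction k)
  case (Suc k)
  then show ?case using homogeneous_in_xvecA[OF assms(1) Suc.IH] by simp
qed (simp add: assms(2))

lemma homogeneous_in_top_ckz:
  assumes j: "j \<in> {1..n}" and h: "homogeneous_in_top j a d p"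
  shows "homogeneous_in_top j (Suc a) d (ckz e mu j p)"
  unfolding homogeneous_in_top_def
proof (intro allI impI)
  fix \<alpha> assume "ckz e mu j p \<alpha> \<noteq> 0"
  then have aj: "Poly_Mapping.lookup \<alpha> j \<noteq> 0" and D: "DiracA e mu {1..<j} p (\<alpha> - \<delta> j) \<noteq> 0"
    unfolding ckz_def mulx_apply by (auto split: if_splits)
  have "{1..<j} \<subseteq> {1..n}" using j by auto
  then obtain i where i: "i \<in> {1..<j}" "p (\<alpha> - \<delta> j + \<delta> i) \<noteq> 0"
    using DiracA_nonzero[OF _ D] by blast
  have k: "\<forall>k. k \<notin> {1..j} \<longrightarrow> Poly_Mapping.lookup (\<alpha> - \<delta> j + \<delta> i) k = 0"
    and a: "Poly_Mapping.lookup (\<alpha> - \<delta> j + \<delta> i) j = a"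
    and s: "(\<Sum>k\<in>{1..<j}. Poly_Mapping.lookup (\<alpha> - \<delta> j + \<delta> i) k) + a = d"
    using h i(2) unfolding homogeneous_in_top_def by auto
  have "(\<Sum>k\<in>{1..<j}. Poly_Mapping.lookup (\<alpha> - \<delta> j + \<delta> i) k) = (\<Sum>k\<in>{1..<j}. Poly_Mapping.lookup \<alpha> k) + 1"
    using sum_lookup_add_delta[of "{1..<j}" i "\<alpha> - \<delta> j"] sum_lookup_diff_delta_notin[of j "{1..<j}" \<alpha>] i
    by simp
  moreover have "Poly_Mapping.lookup \<alpha> k = 0" if "k \<notin> {1..j}" for k
  proof -
    have "k \<noteq> i" "k \<noteq> j" "Poly_Mapping.lookup (\<alpha> - \<delta> j + \<delta> i) k = 0"
      using k that i(1) j by auto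
    then show ?thesis by (simp add: lookup_add lookup_minus lookup_single when_def)
  qed
  moreover have "Poly_Mapping.lookup \<alpha> j = Suc a"
    using a aj i(1) by (simp add: lookup_add lookup_minus lookup_single when_def)
  ultimately show "(\<forall>k. k \<notin> {1..j} \<longrightarrow> Poly_Mapping.lookup \<alpha> k = 0) \<and> Poly_Mapping.lookup \<alpha> j = Suc a \<and>
        (\<Sum>k\<in>{1..<j}. Poly_Mapping.lookup \<alpha> k) + Suc a = d"
    using s by simp
qed

lemma homogeneous_in_top_ckz_funpow:
  assumes "j \<in> {1..n}" "homogeneous_in_top j a d p"
  shows "homogeneous_in_top j (a + k) d ((ckz e mu j ^^ k) p)"
  by (induction k) (auto simp: assms(2) homogeneous_in_top_ckz[OF assms(1)])

end

section \<open>The generalised Cauchy-Kowalewski extension\<close>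

definition bessel_coeff :: "real \<Rightarrow> nat \<Rightarrow> real" where
  "bessel_coeff a m = 1 / (4 ^ m * fact m * Gamma (real m + a + 1))"

lemma Itil_eq_finite_sum:
  fixes z :: "'v::real_normed_vector vpoly \<Rightarrow> 'v vpoly"
  assumes "\<forall>m\<ge>N. (z ^^ (2*m)) f = (\<lambda>\<alpha>. 0)"
  shows "Itil a z f = (\<lambda>\<alpha>. \<Sum>m<N. bessel_coeff a m *\<^sub>R (z ^^ (2*m)) f \<alpha>)"
proof (rule ext)
  fix \<alpha>
  have "suminf (\<lambda>m. bessel_coeff a m *\<^sub>R (z ^^ (2*m)) f \<alpha>) = (\<Sum>m<N. bessel_coeff a m *\<^sub>R (z ^^ (2*m)) f \<alpha>)"
    by (rule suminf_finite) (use assms in auto)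
  then show "Itil a z f \<alpha> = (\<Sum>m<N. bessel_coeff a m *\<^sub>R (z ^^ (2*m)) f \<alpha>)"
    by (simp add: Itil_def bessel_coeff_def)
qed

lemma Itil_commute:
  fixes z :: "'v::real_normed_vector vpoly \<Rightarrow> 'v vpoly"
  assumes F: "op_linear F" and comm: "\<And>p. F (z p) = z (F p)"
    and fin: "\<forall>m\<ge>N. (z ^^ (2*m)) f = (\<lambda>\<alpha>. 0)"
  shows "F (Itil a z f) = Itil a z (F f)"
proof -
  have fin': "\<forall>m\<ge>N. (z ^^ (2*m)) (F f) = (\<lambda>\<alpha>. 0)"
    using fin by (simp add: funpow_commute[of F z, OF comm, symmetric] op_linear_zero[OF F])
  show ?thesis
    unfolding Itil_eq_finite_sum[OF fin] Itil_eq_finite_sum[OF fin'] op_linear_sum[OF F] op_linear_scale[OF F]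
      funpow_commute[of F z, OF comm] ..
qed

lemma CK_eq: "CK e mu j f = (\<lambda>\<alpha>. Gamma (mu j + 1/2) *\<^sub>R (Itil (mu j - 1/2) (ckz e mu j) f \<alpha> +
    (1/2) *\<^sub>R cmult e j (ckz e mu j (Itil (mu j + 1/2) (ckz e mu j) f)) \<alpha>))"
  by (simp add: CK_def ckz_def[abs_def] cmult_def Let_def)

lemma CK_commute:
  assumes F: "op_linear F" and comm: "\<And>p. F (ckz e mu j p) = ckz e mu j (F p)"
    and comm_e: "\<And>p. F (cmult e j p) = cmult e j (F p)"
    and fin: "\<forall>m\<ge>N. (ckz e mu j ^^ (2*m)) f = (\<lambda>\<alpha>. 0)"
  shows "F (CK e mu j f) = CK e mu j (F f)"
  unfolding CK_eq op_linear_scale[OF F] op_linear_add[OF F] comm_e comm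
    Itil_commute[OF F comm fin] ..

lemma Gamma_plus1_pos: "(x::real) > 0 \<Longrightarrow> Gamma (x + 1) = x * Gamma x"
  by (rule Gamma_plus1) (use nonpos_Ints_nonpos in fastforce)

lemma bessel_coeff_shift:
  assumes "(\<mu>::real) > 0"
  shows "bessel_coeff (\<mu> - 1/2) m = 1/2 * bessel_coeff (\<mu> + 1/2) m * (real (2*m) + 1 + \<mu> * 2)"
proof -
  define x where "x = real m + \<mu> + 1/2"
  have x: "x > 0" using assms by (simp add: x_def)
  have g1: "Gamma (real m + (\<mu> - 1/2) + 1) = Gamma x" by (simp add: x_def algebra_simps)
  have g2: "Gamma (real m + (\<mu> + 1/2) + 1) = x * Gamma x"
    using Gamma_plus1_pos[OF x] by (simp add: x_def algebra_simps)
  have c: "real (2*m) + 1 + \<mu> * 2 = 2 * x" by (simp add: x_def algebra_simps)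
  have "Gamma x > 0" using x by simp
  then show ?thesis unfolding bessel_coeff_def g1 g2 c using x by (simp add: field_simps)
qed

lemma bessel_coeff_Suc_shift:
  assumes "(\<mu>::real) > 0"
  shows "bessel_coeff (\<mu> - 1/2) (Suc m) * (real (Suc (2*m)) + 1) = 1/2 * bessel_coeff (\<mu> + 1/2) m"
proof -
  define x where "x = real m + \<mu> + 1/2"
  have x: "x > 0" using assms by (simp add: x_def)
  have g1: "Gamma (real (Suc m) + (\<mu> - 1/2) + 1) = Gamma (x + 1)" by (simp add: x_def algebra_simps)
  have g2: "Gamma (real m + (\<mu> + 1/2) + 1) = Gamma (x + 1)" by (simp add: x_def algebra_simps)
  have G: "Gamma (x + 1) > 0" using x by simp
  have "fact m * (Gamma (x + 1) * (4 * 4 ^ m)) * (1 + real m) \<noteq> 0"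
    using G by (intro no_zero_divisors) (auto simp: add_pos_pos)
  then show ?thesis unfolding bessel_coeff_def g1 g2 using G by (simp add: field_simps)
qed

text \<open>With \<open>z = ckz e mu j\<close>, \<open>u\<^sub>k = D\<^sub>[\<^sub>j\<^sub>-\<^sub>1\<^sub>] z\<^sup>k f\<close> and \<open>w\<^sub>k = T\<^sub>j z\<^sup>k f\<close>, these two identities are the cancellations that
  make \<open>CK\<^sub>j f\<close> monogenic.\<close>

lemma bessel_pairing_even:
  fixes u w :: "nat \<Rightarrow> 'a::real_vector"
  assumes mu: "mu j > 0" and w: "\<And>k. w (Suc k) = dunkl_coeff mu j k *\<^sub>R u k"
  shows "(1/2::real) *\<^sub>R (\<Sum>m<N. bessel_coeff (mu j + 1/2) m *\<^sub>R w (Suc (2*m))) =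
    (\<Sum>m<N. bessel_coeff (mu j - 1/2) m *\<^sub>R u (2*m))"
  unfolding scaleR_sum_right w dunkl_coeff_even bessel_coeff_shift[OF mu] by simp

lemma bessel_pairing_odd:
  fixes u w :: "nat \<Rightarrow> 'a::real_vector"
  assumes mu: "mu j > 0" and w: "\<And>k. w (Suc k) = dunkl_coeff mu j k *\<^sub>R u k"
    and w0: "w 0 = 0" and u_last: "u (Suc (2*d)) = 0"
  shows "(\<Sum>m<Suc d. bessel_coeff (mu j - 1/2) m *\<^sub>R w (2*m)) =
    (1/2::real) *\<^sub>R (\<Sum>m<Suc d. bessel_coeff (mu j + 1/2) m *\<^sub>R u (Suc (2*m)))"
proof -
  have "(\<Sum>m<Suc d. bessel_coeff (mu j - 1/2) m *\<^sub>R w (2*m)) =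
      (\<Sum>m<d. bessel_coeff (mu j - 1/2) (Suc m) *\<^sub>R w (Suc (Suc (2*m))))"
    by (simp add: sum.lessThan_Suc_shift w0 del: sum.lessThan_Suc)
  also have "\<dots> = (\<Sum>m<d. (1/2::real) *\<^sub>R (bessel_coeff (mu j + 1/2) m *\<^sub>R u (Suc (2*m))))"
    unfolding w dunkl_coeff_odd scaleR_scaleR bessel_coeff_Suc_shift[OF mu] by simp
  also have "\<dots> = (1/2::real) *\<^sub>R (\<Sum>m<Suc d. bessel_coeff (mu j + 1/2) m *\<^sub>R u (Suc (2*m)))"
    by (simp add: u_last scaleR_sum_right)
  finally show ?thesis .
qed

context clifford
begin

lemma op_linear_ckz: "j \<le> Suc n \<Longrightarrow> op_linear (ckz e mu j)"
  unfolding ckz_def[abs_def] by (rule op_linear_comp[OF op_linear_mulx op_linear_DiracA]) auto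

lemma ckz_funpow_vanish:
  assumes j: "j \<in> {1..n}" "2 \<le> j" and h: "homogeneous_in (j - 1) d f"
  shows "\<forall>m\<ge>Suc d. (ckz e mu j ^^ (2*m)) f = (\<lambda>\<alpha>. 0)"
proof (intro allI impI)
  fix m assume "Suc d \<le> m"
  moreover have "homogeneous_in_top j (0 + 2*m) d ((ckz e mu j ^^ (2*m)) f)"
    by (rule homogeneous_in_top_ckz_funpow[OF j(1) homogeneous_in_top_0[OF j(2) h]])
  ultimately show "(ckz e mu j ^^ (2*m)) f = (\<lambda>\<alpha>. 0)"
    by (intro homogeneous_in_top_vanish) auto
qed

lemma CK_eq_finite_sum:
  assumes j: "j \<in> {1..n}" "2 \<le> j" and h: "homogeneous_in (j - 1) d f"
  shows "CK e mu j f = (\<lambda>\<alpha>. Gamma (mu j + 1/2) *\<^sub>R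
    ((\<Sum>m<Suc d. bessel_coeff (mu j - 1/2) m *\<^sub>R (ckz e mu j ^^ (2*m)) f \<alpha>) +
     (1/2) *\<^sub>R cmult e j (\<lambda>\<beta>. \<Sum>m<Suc d. bessel_coeff (mu j + 1/2) m *\<^sub>R (ckz e mu j ^^ Suc (2*m)) f \<beta>) \<alpha>))"
proof -
  note fin = ckz_funpow_vanish[OF j h]
  have lz: "op_linear (ckz e mu j)" using j by (intro op_linear_ckz) auto
  have "ckz e mu j (Itil (mu j + 1/2) (ckz e mu j) f) =
      (\<lambda>\<alpha>. \<Sum>m<Suc d. bessel_coeff (mu j + 1/2) m *\<^sub>R (ckz e mu j ^^ Suc (2*m)) f \<alpha>)"
    unfolding Itil_eq_finite_sum[OF fin] op_linear_sum[OF lz] op_linear_scale[OF lz]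
    by (simp add: fun_eq_iff del: sum.lessThan_Suc)
  then show ?thesis unfolding CK_eq Itil_eq_finite_sum[OF fin] by simp
qed

lemma homogeneous_in_CK:
  assumes j: "j \<in> {1..n}" "2 \<le> j" and h: "homogeneous_in (j - 1) d f"
  shows "homogeneous_in j d (CK e mu j f)"
proof -
  have "homogeneous_in j d ((ckz e mu j ^^ k) f)" for k
    using homogeneous_in_top_ckz_funpow[OF j(1) homogeneous_in_top_0[OF j(2) h], of k] j
    by (intro homogeneous_in_top_imp_homogeneous_in) auto
  then show ?thesis
    unfolding CK_eq_finite_sum[OF j h] cmult_def
    by (intro homogeneous_in_scale homogeneous_in_add homogeneous_in_sum homogeneous_in_e[OF j(1)])
qed

lemma DiracA_atLeastAtMost_split:
  assumes "j \<in> {1..n}"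
  shows "DiracA e mu {1..j} p \<alpha> = DiracA e mu {1..<j} p \<alpha> + e j (dunkl mu j p \<alpha>)"
proof -
  have "{1..j} = insert j {1..<j}" using assms by auto
  then show ?thesis unfolding DiracA_def by simp
qed

lemma DiracA_below_top_degree:
  assumes j: "j \<in> {1..n}" and h: "homogeneous_in_top j a d p"
  shows "\<forall>\<alpha>. DiracA e mu {1..<j} p \<alpha> \<noteq> 0 \<longrightarrow> Poly_Mapping.lookup \<alpha> j = a"
proof (intro allI impI)
  fix \<alpha> assume nz: "DiracA e mu {1..<j} p \<alpha> \<noteq> 0"
  have "{1..<j} \<subseteq> {1..n}" using j by auto
  then obtain i where i: "i \<in> {1..<j}" "p (\<alpha> + \<delta> i) \<noteq> 0" using DiracA_nonzero[OF _ nz] by blast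
  then have "Poly_Mapping.lookup (\<alpha> + \<delta> i) j = a" using h unfolding homogeneous_in_top_def by simp
  then show "Poly_Mapping.lookup \<alpha> j = a" using i(1) by (simp add: lookup_add lookup_single when_def)
qed

lemma dunkl_homogeneous_in_below:
  assumes "j \<notin> {1..m}" "homogeneous_in m d f"
  shows "dunkl mu j f = (\<lambda>\<alpha>. 0)"
proof (rule ext)
  fix \<alpha>
  have "f (\<alpha> + \<delta> j) = 0"
  proof (rule ccontr)
    assume "f (\<alpha> + \<delta> j) \<noteq> 0"
    then have "Poly_Mapping.lookup (\<alpha> + \<delta> j) j = 0" using assms unfolding homogeneous_in_def by auto
    then show False by (simp add: lookup_add)
  qed
  then show "dunkl mu j f \<alpha> = 0" by (simp add: dunkl_apply)
qed

lemma dunkl_ckz_funpow_Suc: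
  assumes j: "j \<in> {1..n}" "2 \<le> j" and hf: "homogeneous_in (j - 1) d f"
  shows "dunkl mu j ((ckz e mu j ^^ Suc k) f) =
    (\<lambda>\<alpha>. dunkl_coeff mu j k *\<^sub>R DiracA e mu {1..<j} ((ckz e mu j ^^ k) f) \<alpha>)"
proof -
  have "homogeneous_in_top j k d ((ckz e mu j ^^ k) f)"
    using homogeneous_in_top_ckz_funpow[OF j(1) homogeneous_in_top_0[OF j(2) hf], of k] by simp
  from DiracA_below_top_degree[OF j(1) this] show ?thesis
    by (simp add: ckz_def dunkl_mulx_same)
qed

lemma CK_monogenic:
  assumes j: "j \<in> {1..n}" "2 \<le> j" and hf: "homogeneous_in (j - 1) d f" and mu: "mu j > 0"
  shows "DiracA e mu {1..j} (CK e mu j f) = (\<lambda>\<alpha>. 0)"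
proof (rule ext)
  fix \<alpha>
  define D' where "D' = DiracA e mu {1..<j}"
  define h where "h k = (ckz e mu j ^^ k) f" for k
  define a where "a = bessel_coeff (mu j - 1/2)"
  define b where "b = bessel_coeff (mu j + 1/2)"
  define u where "u k = D' (h k) \<alpha>" for k
  define w where "w k = dunkl mu j (h k) \<alpha>" for k
  define S1 where "S1 = (\<lambda>\<alpha>. \<Sum>m<Suc d. a m *\<^sub>R h (2*m) \<alpha>)"
  define S2 where "S2 = (\<lambda>\<alpha>. \<Sum>m<Suc d. b m *\<^sub>R h (Suc (2*m)) \<alpha>)"
  have sub: "{1..<j} \<subseteq> {1..n}" and jn: "j \<notin> {1..<j}" using j by auto
  note D = op_linear_DiracA[OF sub]
  have w_Suc: "w (Suc k) = dunkl_coeff mu j k *\<^sub>R u k" for k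
    unfolding w_def u_def h_def D'_def dunkl_ckz_funpow_Suc[OF j hf] ..
  have w0: "w 0 = 0"
    using dunkl_homogeneous_in_below[OF _ hf] j by (simp add: w_def h_def)
  have "homogeneous_in_top j (Suc (2*d)) d (h (Suc (2*d)))"
    using homogeneous_in_top_ckz_funpow[OF j(1) homogeneous_in_top_0[OF j(2) hf], of "Suc (2*d)"]
    unfolding h_def by simp
  then have "h (Suc (2*d)) = (\<lambda>\<alpha>. 0)" by (rule homogeneous_in_top_vanish) simp
  then have u_last: "u (Suc (2*d)) = 0"
    using op_linear_zero[OF D] by (simp add: u_def D'_def)
  have CK_S: "CK e mu j f = (\<lambda>\<alpha>. Gamma (mu j + 1/2) *\<^sub>R (S1 \<alpha> + (1/2) *\<^sub>R cmult e j S2 \<alpha>))"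
    unfolding CK_eq_finite_sum[OF j hf] S1_def S2_def a_def b_def h_def ..
  define PU where "PU = (\<Sum>m<Suc d. a m *\<^sub>R u (2*m))"
  define QU where "QU = (\<Sum>m<Suc d. b m *\<^sub>R u (Suc (2*m)))"
  define PW where "PW = (\<Sum>m<Suc d. a m *\<^sub>R w (2*m))"
  define QW where "QW = (\<Sum>m<Suc d. b m *\<^sub>R w (Suc (2*m)))"
  have DCK: "D' (CK e mu j f) \<alpha> = Gamma (mu j + 1/2) *\<^sub>R (PU - (1/2) *\<^sub>R e j QU)"
    unfolding CK_S D'_def op_linear_scale[OF D] op_linear_add[OF D] DiracA_cmult[OF sub j(1) jn]
      S1_def S2_def op_linear_sum[OF D]
    by (simp add: PU_def QU_def u_def cmult_def D'_def op_linear_scale[OF D] del: sum.lessThan_Suc)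
  have TCK: "dunkl mu j (CK e mu j f) \<alpha> = Gamma (mu j + 1/2) *\<^sub>R (PW + (1/2) *\<^sub>R e j QW)"
    unfolding CK_S op_linear_scale[OF op_linear_dunkl] op_linear_add[OF op_linear_dunkl]
      dunkl_cmult[OF j(1)] S1_def S2_def op_linear_sum[OF op_linear_dunkl]
    by (simp add: PW_def QW_def w_def cmult_def op_linear_scale[OF op_linear_dunkl] del: sum.lessThan_Suc)
  have even: "(1/2::real) *\<^sub>R QW = PU"
    unfolding PU_def QW_def a_def b_def by (rule bessel_pairing_even[OF mu w_Suc])
  have odd: "PW = (1/2::real) *\<^sub>R QU"
    unfolding PW_def QU_def a_def b_def by (rule bessel_pairing_odd[OF mu w_Suc w0 u_last])
  have "e j (dunkl mu j (CK e mu j f) \<alpha>) = Gamma (mu j + 1/2) *\<^sub>R ((1/2) *\<^sub>R e j QU - PU)"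
    unfolding TCK odd even[symmetric] using j(1) by (simp add: e_scale e_add e_square)
  then show "DiracA e mu {1..j} (CK e mu j f) \<alpha> = 0"
    unfolding DiracA_atLeastAtMost_split[OF j(1)] D'_def[symmetric] DCK
    by (simp add: algebra_simps)
qed

end

section \<open>Eigenvalues of \<open>\<Gamma>\<^sub>[\<^sub>\<ell>\<^sub>]\<close>\<close>

context clifford
begin

lemma GammaOp_monogenic_homogeneous:
  assumes l: "l \<le> n" and h: "homogeneous_in l d p" and D: "DiracA e mu {1..l} p = (\<lambda>\<alpha>. 0)"
  shows "GammaOp e mu {1..l} p = (\<lambda>\<alpha>. ((-1) ^ d * (real d + gammaA mu {1..l} - 1/2)) *\<^sub>R p \<alpha>)"
proof -
  have A: "{1..l} \<subseteq> {1..n}" using l by auto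
  have deg: "(\<Sum>i\<in>{1..l}. Poly_Mapping.lookup \<alpha> i) = d" if "p \<alpha> \<noteq> 0" for \<alpha>
    using h that unfolding homogeneous_in_def by blast
  have R: "reflA {1..l} p = (\<lambda>\<alpha>. ((-1) ^ d) *\<^sub>R p \<alpha>)"
  proof (rule ext)
    fix \<alpha>
    show "reflA {1..l} p \<alpha> = ((-1) ^ d) *\<^sub>R p \<alpha>"
      using deg[of \<alpha>] by (cases "p \<alpha> = 0") (simp_all add: reflA_def flip: power_sum)
  qed
  have S: "SA e mu {1..l} p = (\<lambda>\<alpha>. (real d + gammaA mu {1..l} - 1/2) *\<^sub>R p \<alpha>)"
  proof (rule ext)
    fix \<alpha>
    show "SA e mu {1..l} p \<alpha> = (real d + gammaA mu {1..l} - 1/2) *\<^sub>R p \<alpha>"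
      unfolding SA_eq[OF A] D op_linear_zero[OF op_linear_xvecA[OF A]] euler_gamma_def euler_def
      using deg[of \<alpha>] by (cases "p \<alpha> = 0") (simp_all add: scaleR_add_left algebra_simps)
  qed
  show ?thesis
    unfolding GammaOp_def R op_linear_scale[OF op_linear_SA[OF A]] S by (simp add: algebra_simps)
qed

end

abbreviation CKbuild_arg ::
  "(nat \<Rightarrow> 'v \<Rightarrow> 'v) \<Rightarrow> (nat \<Rightarrow> real) \<Rightarrow> (nat \<Rightarrow> nat) \<Rightarrow> 'v::real_normed_vector \<Rightarrow> nat \<Rightarrow> 'v vpoly"
where
  "CKbuild_arg e mu js v m \<equiv> (if m = 0 then id else (xvecA e {1..m+1} ^^ js (m+1))) (CKbuild e mu js v m)"

definition CKbuild_degree :: "(nat \<Rightarrow> nat) \<Rightarrow> nat \<Rightarrow> nat" where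
  "CKbuild_degree js m = (if m = 0 then js 1 else (\<Sum>i\<in>{1..m}. js i))"

context clifford
begin

lemma homogeneous_in_CKbuild:
  "Suc m \<le> n \<Longrightarrow> homogeneous_in (Suc m) (CKbuild_degree js m) (CKbuild e mu js v m) \<and>
     homogeneous_in (Suc m) (CKbuild_degree js (Suc m)) (CKbuild_arg e mu js v m)"
proof (induction m)
  case 0
  then show ?case by (simp add: CKbuild_degree_def homogeneous_in_def lookup_single when_def)
next
  case (Suc m)
  then have IH: "homogeneous_in (Suc m) (CKbuild_degree js (Suc m)) (CKbuild_arg e mu js v m)" by simp
  have j: "Suc (Suc m) \<in> {1..n}" "2 \<le> Suc (Suc m)" using Suc.prems by auto
  have B: "homogeneous_in (Suc (Suc m)) (CKbuild_degree js (Suc m)) (CKbuild e mu js v (Suc m))"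
    using homogeneous_in_CK[OF j] IH by (simp add: numeral_2_eq_2)
  moreover have "CKbuild_degree js (Suc (Suc m)) = CKbuild_degree js (Suc m) + js (Suc (Suc m))"
    by (simp add: CKbuild_degree_def)
  ultimately show ?case
    using homogeneous_in_xvecA_funpow[OF _ B, of "js (Suc (Suc m))"] Suc.prems by simp
qed

lemma CKbuild_monogenic:
  assumes m: "1 \<le> m" "Suc m \<le> n" and mu: "\<forall>i\<in>{1..n}. mu i > 0"
  shows "DiracA e mu {1..Suc m} (CKbuild e mu js v m) = (\<lambda>\<alpha>. 0)"
proof -
  obtain k where k: "m = Suc k" using m(1) by (cases m) auto
  have j: "Suc (Suc k) \<in> {1..n}" "2 \<le> Suc (Suc k)" using m k by auto
  have "homogeneous_in (Suc (Suc k) - 1) (CKbuild_degree js (Suc k)) (CKbuild_arg e mu js v k)"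
    using homogeneous_in_CKbuild[of k js v] m k by simp
  from CK_monogenic[OF j this] mu j show ?thesis
    using k by (simp add: numeral_2_eq_2)
qed

lemma GammaOp_CKbuild_Suc:
  assumes l: "2 \<le> l" "l \<le> Suc m" and m: "Suc (Suc m) \<le> n"
    and IH: "GammaOp e mu {1..l} (CKbuild e mu js v m) = (\<lambda>\<alpha>. c *\<^sub>R CKbuild e mu js v m \<alpha>)"
  shows "GammaOp e mu {1..l} (CKbuild e mu js v (Suc m)) = (\<lambda>\<alpha>. c *\<^sub>R CKbuild e mu js v (Suc m) \<alpha>)"
proof -
  define j where "j = Suc (Suc m)"
  define A where "A = {1..l}"
  define X where "X = xvecA e {1..Suc m}"
  define g where "g = (X ^^ js (Suc m)) (CKbuild e mu js v m)"
  have A: "A \<subseteq> {1..n}" using l m by (auto simp: A_def)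
  have jn: "j \<in> {1..n}" "2 \<le> j" "j \<notin> A" using l m by (auto simp: j_def A_def)
  have m1: "m \<noteq> 0" using l by auto
  have B: "CKbuild e mu js v (Suc m) = CK e mu j g"
    using m1 by (simp add: j_def g_def X_def numeral_2_eq_2)
  have "homogeneous_in (j - 1) (CKbuild_degree js (Suc m)) g"
    using homogeneous_in_CKbuild[of m js v] m m1 by (simp add: j_def g_def X_def)
  note fin = ckz_funpow_vanish[OF jn(1,2) this]
  have GX: "GammaOp e mu A (X p) = X (GammaOp e mu A p)" for p
    unfolding X_def by (rule GammaOp_xvecA_superset) (use l m A_def in auto)
  have lX: "op_linear X" unfolding X_def using m by (intro op_linear_xvecA) auto
  have Gg: "GammaOp e mu A g = (\<lambda>\<alpha>. c *\<^sub>R g \<alpha>)"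
    unfolding g_def funpow_commute[of "GammaOp e mu A" X, OF GX] IH[folded A_def]
      op_linear_scale[OF op_linear_funpow[OF lX]] ..
  have Gz: "GammaOp e mu A (ckz e mu j p) = ckz e mu j (GammaOp e mu A p)" for p
  proof -
    have "GammaOp e mu A (DiracA e mu {1..<j} p) = DiracA e mu {1..<j} (GammaOp e mu A p)"
      by (rule GammaOp_DiracA_superset) (use l m in \<open>auto simp: A_def j_def\<close>)
    then show ?thesis unfolding ckz_def using GammaOp_mulx[OF A jn(3)] by simp
  qed
  have lz: "op_linear (ckz e mu j)" using jn by (intro op_linear_ckz) auto
  have "GammaOp e mu A (CK e mu j g) = CK e mu j (GammaOp e mu A g)"
    by (rule CK_commute[OF op_linear_GammaOp[OF A] Gz GammaOp_cmult[OF A jn(1) jn(3)] fin])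
  also have "\<dots> = (\<lambda>\<alpha>. c *\<^sub>R CK e mu j g \<alpha>)"
    unfolding Gg
    by (rule CK_commute[OF op_linear_scaleR _ _ fin, symmetric])
      (simp_all add: op_linear_scale[OF lz] op_linear_scale[OF op_linear_cmult[OF jn(1)]])
  finally show ?thesis unfolding B A_def .
qed

lemma GammaOp_CKbuild_eigen:
  assumes l: "2 \<le> l" "l - 1 \<le> m" "m \<le> n - 1" and mu: "\<forall>i\<in>{1..n}. mu i > 0"
  shows "GammaOp e mu {1..l} (CKbuild e mu js v m) =
    (\<lambda>\<alpha>. ((-1) ^ (\<Sum>i=1..l-1. js i) * (real (\<Sum>i=1..l-1. js i) + gammaA mu {1..l} - 1/2))
      *\<^sub>R CKbuild e mu js v m \<alpha>)"
  using l(2,3)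
proof (induction m rule: dec_induct)
  case base
  define d where "d = (\<Sum>i=1..l-1. js i)"
  have Sl: "Suc (l - 1) = l" using l by simp
  have "homogeneous_in l d (CKbuild e mu js v (l - 1))"
    using homogeneous_in_CKbuild[of "l - 1" js v] l base unfolding Sl
    by (simp add: CKbuild_degree_def d_def)
  moreover have "DiracA e mu {1..l} (CKbuild e mu js v (l - 1)) = (\<lambda>\<alpha>. 0)"
    using CKbuild_monogenic[of "l - 1" js v] l base mu unfolding Sl by simp
  ultimately show ?case using GammaOp_monogenic_homogeneous base l by (simp add: d_def)
next
  case (step m)
  then show ?case using GammaOp_CKbuild_Suc[OF l(1)] by simp
qed

end

theorem proposition8:
  fixes n k l :: nat and mu :: "nat \<Rightarrow> real"
    and e :: "nat \<Rightarrow> 'v::real_normed_vector \<Rightarrow> 'v"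
    and vs :: "'s::finite \<Rightarrow> 'v" and s :: 's
    and js :: "nat \<Rightarrow> nat"
  assumes "n \<ge> 3"
    and "\<forall>i\<in>{1..n}. mu i > 0"
    and "\<forall>i\<in>{1..n}. linear (e i)"
    and "\<forall>i\<in>{1..n}. \<forall>j\<in>{1..n}. \<forall>w. e i (e j w) + e j (e i w) = (if i = j then (-2) *\<^sub>R w else 0)"
    and "inj vs" and "independent (range vs)" and "span (range vs) = UNIV"
    and "(\<Sum>i=1..n-2. js i) \<le> k"
    and "js (n - 1) = k - (\<Sum>i=1..n-2. js i)"
    and "l \<in> {2..n}"
  shows "GammaOp e mu {1..l} (Psi e mu n js (vs s)) =
         (\<lambda>\<alpha>. ((-1) ^ (\<Sum>i=1..l-1. js i) * (real (\<Sum>i=1..l-1. js i) + gammaA mu {1..l} - 1/2))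
                *\<^sub>R Psi e mu n js (vs s) \<alpha>)"
proof -
  interpret clifford e mu n
    by (rule clifford.intro) (use assms(3,4) in blast)+
  show ?thesis
    unfolding Psi_def by (rule GammaOp_CKbuild_eigen) (use assms(2,10) in auto)
qed

end
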